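(* Let $\mathbf{P}=\{p_n(x)\}_{n\ge0}$ be the Sheffer sequence for the pair $(1,f(t))$, where $f$ is odd, i.e. $f(-t)=-f(t)$. Then for $n\ge1$ and $0\le k\le n-1$, $$A_{n,k}(\mathbf{P})=A_{n,n-1-k}(\mathbf{P}).$$
   Context: $f$ is a formal power series over $\mathbb{C}$ with $f(0)=0$, $f'(0)\ne0$, and $\bar f$ its compositional inverse; $\{p_n\}$ is Sheffer for $(1,f)$ iff $\sum_{n\ge0}p_n(x)\frac{t^n}{n!}=e^{x\bar f(t)}$. The Eulerian numbers $A_{n,k}(\mathbf{P})$ ($0\le k\le n$) are the unique coefficients with $p_n(x)=\sum_{k=0}^{n}A_{n,k}(\mathbf{P})\binom{x+n-k-1}{n}$, where $\binom{y}{n}=y(y-1)\cdots(y-n+1)/n!$. *)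

theory Defs
  imports "HOL-Computational_Algebra.Computational_Algebra"
begin

(* Sheffer sequence for (1,f): sum_n p_n(x) t^n/n! = exp(x * fbar(t)),
   fbar = compositional inverse fps_inv f; exp(x*fbar(t)) = fps_exp x oo fps_inv f. *)
definition sheffer_1 :: "complex fps \<Rightarrow> (nat \<Rightarrow> complex poly) \<Rightarrow> bool" where
  "sheffer_1 f p \<longleftrightarrow>
     (\<forall>n x. poly (p n) x = fact n * ((fps_exp x oo fps_inv f) $ n))"

definition eulerian_coeffs :: "(nat \<Rightarrow> complex poly) \<Rightarrow> (nat \<Rightarrow> nat \<Rightarrow> complex) \<Rightarrow> bool" where
  "eulerian_coeffs p A \<longleftrightarrow>
     (\<forall>n x. poly (p n) x =
        (\<Sum>k=0..n. A n k * ((x + of_nat n - of_nat k - 1) gchoose n)))"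

end

theory Submission
  imports Defs
begin

text \<open>Since \<open>f\<close> is odd so is its inverse \<open>g\<close>, hence \<open>exp(-x g(t)) = exp(x g(-t))\<close>, i.e.
  \<open>p_n(-x) = (-1)^n p_n(x)\<close>. Write \<open>b_j(x) = binom(x+n-j-1, n)\<close>. From \<open>p_n(0) = 0\<close> and
  \<open>b_j(0) = 0\<close> for \<open>j < n\<close> one gets \<open>A(n,n) = 0\<close>; then \<open>b_j(-x) = (-1)^n b_{n-1-j}(x)\<close> turns
  the parity into an expansion of \<open>p_n\<close> with reversed coefficients. The \<open>b_j\<close> are linearly
  independent (the matrix \<open>b_i(j+1)\<close> is triangular), so the two coefficient sequences agree.\<close>

lemma fps_inv_odd:
  fixes f :: "'a::field fps"
  assumes f0: "f $ 0 = 0" and f1: "f $ 1 \<noteq> 0" and odd: "f oo (- fps_X) = - f"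
  shows "fps_inv f oo (- fps_X) = - fps_inv f"
proof -
  define g where "g = fps_inv f"
  have g0: "g $ 0 = 0" by (simp add: g_def fps_inv_def)
  have mX0: "(- fps_X :: 'a fps) $ 0 = 0" by simp
  have fg: "f oo g = fps_X" using fps_inv_right[OF f0 f1] by (simp add: g_def)
  have gf: "g oo f = fps_X" using fps_inv[OF f0 f1] by (simp add: g_def)
  have "f oo (g oo (- fps_X)) = - fps_X"
    using fps_compose_assoc[OF mX0 g0, of f] fg by simp
  moreover have "f oo (- g) = - fps_X"
    using fps_compose_assoc[OF g0 mX0, of f] odd fg g0 by (simp add: fps_compose_uminus)
  ultimately have "(g oo f) oo (g oo (- fps_X)) = (g oo f) oo (- g)"
    using fps_compose_assoc[of "g oo (- fps_X)" f g] fps_compose_assoc[of "- g" f g] f0 g0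
    by simp
  thus ?thesis using gf g0 by (simp add: g_def)
qed

lemma sheffer_1_poly_uminus:
  assumes "f $ 0 = 0" and "f $ 1 \<noteq> 0" and "f oo (- fps_X) = - f" and "sheffer_1 f p"
  shows "poly (p n) (- x) = (-1) ^ n * poly (p n) x"
proof -
  define g where "g = fps_inv f"
  have g0: "g $ 0 = 0" by (simp add: g_def fps_inv_def)
  have mX0: "(- fps_X :: complex fps) $ 0 = 0" by simp
  have "fps_exp (- x) oo g = (fps_exp x oo (- fps_X)) oo g" by simp
  also have "\<dots> = fps_exp x oo ((- fps_X) oo g)" using fps_compose_assoc[OF g0 mX0] by simp
  also have "\<dots> = fps_exp x oo (g oo (- fps_X))"
    using g0 fps_inv_odd[OF assms(1-3)] by (simp add: g_def fps_compose_uminus)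
  also have "\<dots> = (fps_exp x oo g) oo (- fps_X)" using fps_compose_assoc[OF mX0 g0] by simp
  finally have "(fps_exp (- x) oo g) $ n = (-1) ^ n * (fps_exp x oo g) $ n"
    by (simp add: fps_compose_uminus')
  thus ?thesis using assms(4) unfolding sheffer_1_def g_def by simp
qed

lemma sheffer_1_poly_0:
  assumes "sheffer_1 f p" and "n \<ge> 1"
  shows "poly (p n) 0 = 0"
  using assms unfolding sheffer_1_def by simp

lemma eulerian_basis_coeffs_unique:
  fixes c d :: "nat \<Rightarrow> 'a::field_char_0"
  assumes eq: "\<And>x. (\<Sum>j=0..n. c j * ((x + of_nat n - of_nat j - 1) gchoose n))
                 = (\<Sum>j=0..n. d j * ((x + of_nat n - of_nat j - 1) gchoose n))"
    and "j \<le> n"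
  shows "c j = d j"
  using \<open>j \<le> n\<close>
proof (induction j rule: less_induct)
  case (less j)
  have basis_at: "(of_nat (j + 1) + of_nat n - of_nat i - 1 :: 'a) gchoose n
      = (if i = j then 1 else 0)" if "j \<le> i" "i \<le> n" for i
  proof -
    have "(of_nat (j + 1) + of_nat n - of_nat i - 1 :: 'a) = of_nat (n + j - i)"
      using that by (simp add: of_nat_diff)
    moreover have "n + j - i < n" if "i \<noteq> j" using that \<open>j \<le> i\<close> \<open>i \<le> n\<close> by auto
    ultimately show ?thesis by (auto simp: binomial_gbinomial[symmetric])
  qed
  have "(\<Sum>i=0..n. (c i - d i) * ((of_nat (j + 1) + of_nat n - of_nat i - 1 :: 'a) gchoose n))
      = (\<Sum>i=0..n. if i = j then c j - d j else 0)"
  proof (rule sum.cong[OF refl])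
    fix i assume "i \<in> {0..n}"
    then show "(c i - d i) * ((of_nat (j + 1) + of_nat n - of_nat i - 1 :: 'a) gchoose n)
        = (if i = j then c j - d j else 0)"
      using less.IH[of i] less.prems basis_at[of i] by (cases "i < j") auto
  qed
  also have "\<dots> = c j - d j" using less.prems by simp
  finally show ?case using eq[of "of_nat (j + 1)"] by (simp add: algebra_simps sum_subtractf)
qed

lemma eulerian_basis_sum_at_0:
  fixes c :: "nat \<Rightarrow> 'a::field_char_0"
  shows "(\<Sum>j=0..n. c j * ((of_nat n - of_nat j - 1) gchoose n)) = (-1) ^ n * c n"
proof -
  have basis_at_0: "(of_nat n - of_nat j - 1 :: 'a) gchoose n = (if j = n then (-1) ^ n else 0)"
    if "j \<le> n" for j
  proof (cases "j = n")
    case True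
    have "(-1 :: 'a) gchoose n = (-1) ^ n"
      by (subst gbinomial_negated_upper) (simp flip: binomial_gbinomial)
    with True show ?thesis by simp
  next
    case False
    then have "(of_nat n - of_nat j - 1 :: 'a) = of_nat (n - j - 1)"
      using that by (simp add: of_nat_diff)
    then have "(of_nat n - of_nat j - 1 :: 'a) gchoose n = of_nat ((n - j - 1) choose n)"
      by (simp only: binomial_gbinomial)
    with False that show ?thesis by simp
  qed
  have "(\<Sum>j=0..n. c j * ((of_nat n - of_nat j - 1) gchoose n))
      = (\<Sum>j=0..n. if j = n then c n * (-1) ^ n else 0)"
    by (rule sum.cong) (simp_all add: basis_at_0)
  then show ?thesis by simp
qed

lemma gchoose_reflect:
  fixes x :: "'a::field_char_0"
  shows "(- x + of_nat n - of_nat j - 1) gchoose n = (-1) ^ n * ((x + of_nat j) gchoose n)"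
  by (subst gbinomial_negated_upper) (simp add: algebra_simps)

lemma eulerian_basis_sum_reflect:
  fixes c :: "nat \<Rightarrow> 'a::field_char_0"
  assumes "c n = 0"
  shows "(-1) ^ n * (\<Sum>j=0..n. c j * ((- x + of_nat n - of_nat j - 1) gchoose n))
       = (\<Sum>j=0..n. (if j < n then c (n - 1 - j) else 0)
                      * ((x + of_nat n - of_nat j - 1) gchoose n))"
proof (cases n)
  case 0
  with assms show ?thesis by simp
next
  case (Suc m)
  have "(-1) ^ n * (\<Sum>j=0..n. c j * ((- x + of_nat n - of_nat j - 1) gchoose n))
      = (\<Sum>j=0..n. c j * ((x + of_nat j) gchoose n))"
    unfolding gchoose_reflect sum_distrib_left
    by (simp add: mult.left_commute flip: power_mult_distrib)
  also have "\<dots> = (\<Sum>j=0..m. c j * ((x + of_nat j) gchoose n))"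
    using assms Suc by simp
  also have "\<dots> = (\<Sum>j=0..m. c (m - j) * ((x + of_nat (m - j)) gchoose n))"
    by (rule sum.atLeastAtMost_rev[of _ 0 m, simplified])
  also have "\<dots> = (\<Sum>j=0..n. (if j < n then c (n - 1 - j) else 0)
                              * ((x + of_nat n - of_nat j - 1) gchoose n))"
    by (simp add: Suc of_nat_diff)
  finally show ?thesis .
qed

theorem theorem3p3:
  fixes f :: "complex fps" and p :: "nat \<Rightarrow> complex poly" and A :: "nat \<Rightarrow> nat \<Rightarrow> complex"
  assumes "fps_nth f 0 = 0" and "fps_nth f 1 \<noteq> 0"
    and "f oo (- fps_X) = - f"
    and "sheffer_1 f p"
    and "eulerian_coeffs p A"
    and "n \<ge> 1" and "k \<le> n - 1"
  shows "A n k = A n (n - 1 - k)"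
proof -
  have expansion: "poly (p n) x = (\<Sum>j=0..n. A n j * ((x + of_nat n - of_nat j - 1) gchoose n))"
    for x using assms(5) unfolding eulerian_coeffs_def by blast
  have "A n n = 0"
    using expansion[of 0] sheffer_1_poly_0[OF assms(4,6)] eulerian_basis_sum_at_0[of "A n" n]
    by simp
  then have "poly (p n) x = (\<Sum>j=0..n. (if j < n then A n (n - 1 - j) else 0)
                                       * ((x + of_nat n - of_nat j - 1) gchoose n))" for x
    using sheffer_1_poly_uminus[OF assms(1-4), of n "- x"] expansion[of "- x"]
      eulerian_basis_sum_reflect[of "A n" n x] by simp
  then have "A n k = (if k < n then A n (n - 1 - k) else 0)"
    using eulerian_basis_coeffs_unique[where c = "A n" and n = n and j = k] expansion assms(6,7)
    by simp
  with assms(6,7) show ?thesis by simp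
qed

end
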